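(* Let $S$ be an ideal extension of a semigroup $T$ by a semigroup $U$, i.e. $T$ is isomorphic to an ideal $T'$ of $S$ and the Rees quotient $S/T'$ is isomorphic to $U$. If $T$ and $U$ are both defined by finite complete rewriting systems, then $S$ is also defined by a finite complete rewriting system.
   Context: For an ideal $I$ of a semigroup $S$, the Rees quotient $S/I$ is the quotient of $S$ by the congruence $\rho_I$ where $s\,\rho_I\, t$ iff $s=t$ or $s,t\in I$. A rewriting system $\langle X\mid R\rangle$ consists of an alphabet $X$ and rules $u\to v$ with $u,v\in X^+$; it is finite if $X,R$ are finite. One-step reduction: $w_1uw_2\to_R w_1vw_2$ for $(u\to v)\in R$; $\to_R^*$ is its reflexive transitive closure. It is noetherian if there is no infinite chain $w_1\to_R w_2\to_R\cdots$, confluent if $u\to_R^*v$, $u\to_R^*v'$ imply a common $w$ with $v\to_R^*w$, $v'\to_R^*w$, and complete if both. A semigroup is defined by $\langle X\mid R\rangle$ if it is isomorphic to $X^+$ modulo the congruence generated by $R$. *)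

theory Defs
  imports "HOL-Algebra.Group"
begin

text \<open>A semigroup is modelled as an HOL-Algebra monoid record whose unit field is ignored.\<close>

definition is_semigroup :: "('a, 'm) monoid_scheme \<Rightarrow> bool" where
  "is_semigroup S \<longleftrightarrow>
     (\<forall>x\<in>carrier S. \<forall>y\<in>carrier S. x \<otimes>\<^bsub>S\<^esub> y \<in> carrier S) \<and>
     (\<forall>x\<in>carrier S. \<forall>y\<in>carrier S. \<forall>z\<in>carrier S.
        (x \<otimes>\<^bsub>S\<^esub> y) \<otimes>\<^bsub>S\<^esub> z = x \<otimes>\<^bsub>S\<^esub> (y \<otimes>\<^bsub>S\<^esub> z))"

definition semigroup_ideal :: "'a set \<Rightarrow> ('a, 'm) monoid_scheme \<Rightarrow> bool" where
  "semigroup_ideal I S \<longleftrightarrow> I \<noteq> {} \<and> I \<subseteq> carrier S \<and>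
     (\<forall>s\<in>carrier S. \<forall>i\<in>I. s \<otimes>\<^bsub>S\<^esub> i \<in> I \<and> i \<otimes>\<^bsub>S\<^esub> s \<in> I)"

definition rees_class :: "'a set \<Rightarrow> 'a \<Rightarrow> 'a set" where
  "rees_class I s = (if s \<in> I then I else {s})"

definition rees_quotient :: "('a, 'm) monoid_scheme \<Rightarrow> 'a set \<Rightarrow> 'a set monoid" where
  "rees_quotient S I =
     \<lparr> carrier = rees_class I ` carrier S,
       mult = (\<lambda>A B. rees_class I ((SOME a. a \<in> A) \<otimes>\<^bsub>S\<^esub> (SOME b. b \<in> B))),
       one = undefined \<rparr>"

definition words_plus :: "'x set \<Rightarrow> 'x list set" where
  "words_plus X = {w. w \<in> lists X \<and> w \<noteq> []}"

definition rewriting_system :: "'x set \<Rightarrow> ('x list \<times> 'x list) set \<Rightarrow> bool" where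
  "rewriting_system X R \<longleftrightarrow> (\<forall>(u, v)\<in>R. u \<in> words_plus X \<and> v \<in> words_plus X)"

definition rstep :: "'x set \<Rightarrow> ('x list \<times> 'x list) set \<Rightarrow> ('x list \<times> 'x list) set" where
  "rstep X R = {(w1 @ u @ w2, w1 @ v @ w2) | w1 u v w2.
                  (u, v) \<in> R \<and> w1 \<in> lists X \<and> w2 \<in> lists X}"

definition noetherian_rs :: "'x set \<Rightarrow> ('x list \<times> 'x list) set \<Rightarrow> bool" where
  "noetherian_rs X R \<longleftrightarrow> \<not> (\<exists>f::nat \<Rightarrow> 'x list. \<forall>i. (f i, f (Suc i)) \<in> rstep X R)"

definition confluent_rs :: "'x set \<Rightarrow> ('x list \<times> 'x list) set \<Rightarrow> bool" where
  "confluent_rs X R \<longleftrightarrow>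
     (\<forall>u v v'. (u, v) \<in> (rstep X R)\<^sup>* \<and> (u, v') \<in> (rstep X R)\<^sup>* \<longrightarrow>
        (\<exists>w. (v, w) \<in> (rstep X R)\<^sup>* \<and> (v', w) \<in> (rstep X R)\<^sup>*))"

definition complete_rs :: "'x set \<Rightarrow> ('x list \<times> 'x list) set \<Rightarrow> bool" where
  "complete_rs X R \<longleftrightarrow> noetherian_rs X R \<and> confluent_rs X R"

definition rs_congruence :: "'x set \<Rightarrow> ('x list \<times> 'x list) set \<Rightarrow> ('x list \<times> 'x list) set" where
  "rs_congruence X R = (rstep X R \<union> (rstep X R)\<inverse>)\<^sup>* \<inter> (words_plus X \<times> words_plus X)"

definition rs_semigroup :: "'x set \<Rightarrow> ('x list \<times> 'x list) set \<Rightarrow> 'x list set monoid" where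
  "rs_semigroup X R =
     \<lparr> carrier = words_plus X // rs_congruence X R,
       mult = (\<lambda>A B. rs_congruence X R `` {(SOME a. a \<in> A) @ (SOME b. b \<in> B)}),
       one = undefined \<rparr>"

text \<open>\<open>S\<close> is defined by a finite complete rewriting system. Any finite alphabet can be
  relabelled into \<open>nat\<close>, so we take alphabets to be finite sets of naturals.\<close>

definition defined_by_fcrs :: "('a, 'm) monoid_scheme \<Rightarrow> bool" where
  "defined_by_fcrs S \<longleftrightarrow>
     (\<exists>(X::nat set) R. finite X \<and> finite R \<and> rewriting_system X R \<and> complete_rs X R \<and>
        S \<cong> rs_semigroup X R)"

end

theory Submission
  imports Defs "HOL-Library.Multiset" "HOL-Library.Countable"
begin

text \<open>
  Fix finite noetherian presentations \<open>\<langle>X | R\<rangle>\<close> of the ideal \<open>T'\<close> and \<open>\<langle>Y | Q\<rangle>\<close> of \<open>U = S/T'\<close>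
  in which distinct irreducible words have distinct values, and lift every letter \<open>y \<in> Y\<close> to an
  element of \<open>S\<close> in its Rees class. Over the alphabet \<open>X \<uplus> Y\<close> take the rules of \<open>R\<close>; the rules of
  \<open>Q\<close> whose left side is nonzero in \<open>U\<close>; a rule rewriting every left side of \<open>Q\<close> that is zero in
  \<open>U\<close>, and the irreducible word of zero, to an \<open>X\<close>-word with the same value in \<open>T'\<close>; and rules
  rewriting \<open>xy\<close> and \<open>yx\<close> to \<open>X\<close>-words for the corresponding products, which lie in the ideal.
  An irreducible word is then either an \<open>R\<close>-irreducible \<open>X\<close>-word or a \<open>Q\<close>-irreducible \<open>Y\<close>-word of
  nonzero value, so distinct irreducible words still have distinct values in \<open>S\<close>, and this
  forces confluence. Every rule either rewrites or breaks up a maximal block of \<open>Y\<close>-letters, or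
  leaves these blocks alone and applies \<open>R\<close> inside a block of \<open>X\<close>-letters; hence the multisets of
  \<open>Y\<close>-blocks and of \<open>X\<close>-blocks decrease lexicographically, and the system terminates.
\<close>

hide_const (open) Multiset.mult

lemma iso_inv_into_closed:
  assumes h: "h \<in> iso G H"
    and closed: "\<And>a b. a \<in> carrier G \<Longrightarrow> b \<in> carrier G \<Longrightarrow> a \<otimes>\<^bsub>G\<^esub> b \<in> carrier G"
  shows "inv_into (carrier G) h \<in> iso H G"
proof -
  let ?g = "inv_into (carrier G) h"
  have hom: "h \<in> hom G H" and bij: "bij_betw h (carrier G) (carrier H)"
    using h by (auto simp: iso_def)
  then have bij_inv: "bij_betw ?g (carrier H) (carrier G)"
    by (simp add: bij_betw_inv_into)
  then have g_carrier: "?g x \<in> carrier G" if "x \<in> carrier H" for x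
    using that by (meson bij_betwE)
  have "?g (x \<otimes>\<^bsub>H\<^esub> y) = ?g x \<otimes>\<^bsub>G\<^esub> ?g y" if "x \<in> carrier H" "y \<in> carrier H" for x y
  proof (rule inv_into_f_eq)
    show "inj_on h (carrier G)"
      using bij by (simp add: bij_betw_def)
    show "?g x \<otimes>\<^bsub>G\<^esub> ?g y \<in> carrier G"
      by (simp add: closed g_carrier that)
    show "h (?g x \<otimes>\<^bsub>G\<^esub> ?g y) = x \<otimes>\<^bsub>H\<^esub> y"
      using hom bij bij_betw_inv_into_right[of h] unfolding hom_def by (simp add: g_carrier that)
  qed
  then show ?thesis
    using bij_inv g_carrier by (auto simp: iso_def hom_def)
qed

lemma rees_class_eq_ideal: "rees_class I s = I \<Longrightarrow> s \<in> I"
  unfolding rees_class_def by (auto split: if_splits)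

lemma rees_class_inj: "s \<notin> I \<Longrightarrow> rees_class I t = rees_class I s \<Longrightarrow> t = s"
  unfolding rees_class_def by (auto split: if_splits)

lemma rees_quotient_mult:
  assumes ideal: "semigroup_ideal I S" and s: "s \<in> carrier S" and t: "t \<in> carrier S"
  shows "rees_class I s \<otimes>\<^bsub>rees_quotient S I\<^esub> rees_class I t = rees_class I (s \<otimes>\<^bsub>S\<^esub> t)"
proof -
  have nonempty: "\<exists>a. a \<in> rees_class I r" and sub: "rees_class I r \<subseteq> carrier S"
    if "r \<in> carrier S" for r
    using ideal that unfolding semigroup_ideal_def rees_class_def by auto
  define a where "a = (SOME a. a \<in> rees_class I s)"
  define b where "b = (SOME b. b \<in> rees_class I t)"
  have a: "a \<in> rees_class I s" and b: "b \<in> rees_class I t"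
    unfolding a_def b_def using nonempty s t by (metis someI)+
  then have ab: "a \<in> carrier S" "b \<in> carrier S"
    using sub s t by auto
  have prod: "rees_class I s \<otimes>\<^bsub>rees_quotient S I\<^esub> rees_class I t = rees_class I (a \<otimes>\<^bsub>S\<^esub> b)"
    unfolding rees_quotient_def a_def b_def by simp
  show ?thesis
  proof (cases "s \<in> I \<or> t \<in> I")
    case True
    then have "a \<in> I \<or> b \<in> I"
      using a b unfolding rees_class_def by auto
    then have "a \<otimes>\<^bsub>S\<^esub> b \<in> I" and "s \<otimes>\<^bsub>S\<^esub> t \<in> I"
      using True ideal ab s t unfolding semigroup_ideal_def by auto
    then show ?thesis
      using prod unfolding rees_class_def by simp
  next
    case False
    then have "a = s" "b = t"
      using a b unfolding rees_class_def by auto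
    then show ?thesis
      using prod by simp
  qed
qed

lemma rees_quotient_mult_closed:
  assumes "is_semigroup S" and "semigroup_ideal I S"
    and "A \<in> carrier (rees_quotient S I)" and "B \<in> carrier (rees_quotient S I)"
  shows "A \<otimes>\<^bsub>rees_quotient S I\<^esub> B \<in> carrier (rees_quotient S I)"
proof -
  obtain s t where "s \<in> carrier S" "t \<in> carrier S" "A = rees_class I s" "B = rees_class I t"
    using assms(3,4) unfolding rees_quotient_def by auto
  moreover have "s \<otimes>\<^bsub>S\<^esub> t \<in> carrier S"
    using assms(1) calculation(1,2) unfolding is_semigroup_def by auto
  ultimately show ?thesis
    using rees_quotient_mult[OF assms(2)] unfolding rees_quotient_def by auto
qed

section \<open>Rewriting\<close>

lemma rstepI:
  "(u, v) \<in> R \<Longrightarrow> w1 \<in> lists X \<Longrightarrow> w2 \<in> lists X \<Longrightarrow> (w1 @ u @ w2, w1 @ v @ w2) \<in> rstep X R"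
  unfolding rstep_def by blast

lemma rstep_in_context:
  assumes "(u, v) \<in> rstep X R" and "a \<in> lists X" and "b \<in> lists X"
  shows "(a @ u @ b, a @ v @ b) \<in> rstep X R"
proof -
  obtain w1 u0 v0 w2 where "u = w1 @ u0 @ w2" "v = w1 @ v0 @ w2" "(u0, v0) \<in> R"
    "w1 \<in> lists X" "w2 \<in> lists X"
    using assms(1) unfolding rstep_def by blast
  then show ?thesis
    using assms(2,3) rstepI[of u0 v0 R "a @ w1" X "w2 @ b"] by simp
qed

lemma rstep_of_rule: "(u, v) \<in> R \<Longrightarrow> (u, v) \<in> rstep X R"
  using rstepI[of u v R "[]" X "[]"] by simp

lemma rstep_words_plus:
  assumes "rewriting_system X R" and "(u, v) \<in> rstep X R"
  shows "u \<in> words_plus X" and "v \<in> words_plus X"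
  using assms unfolding rstep_def rewriting_system_def words_plus_def by fastforce+

lemma rtrancl_rstep_words_plus:
  assumes "rewriting_system X R" and "(u, v) \<in> (rstep X R)\<^sup>*" and "u \<in> words_plus X"
  shows "v \<in> words_plus X"
  using assms(2,3) by induction (use rstep_words_plus[OF assms(1)] in auto)

lemma words_plus_append: "u \<in> words_plus X \<Longrightarrow> v \<in> words_plus X \<Longrightarrow> u @ v \<in> words_plus X"
  unfolding words_plus_def by auto

lemma noetherian_rs_iff_wf: "noetherian_rs X R \<longleftrightarrow> wf ((rstep X R)\<inverse>)"
  unfolding noetherian_rs_def wf_iff_no_infinite_down_chain by auto

definition rs_irreducible :: "'x set \<Rightarrow> ('x list \<times> 'x list) set \<Rightarrow> 'x list \<Rightarrow> bool" where
  "rs_irreducible X R u \<longleftrightarrow> (\<nexists>v. (u, v) \<in> rstep X R)"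

lemma rs_normal_form_exists:
  assumes "noetherian_rs X R"
  shows "\<exists>n. (w, n) \<in> (rstep X R)\<^sup>* \<and> rs_irreducible X R n"
  using assms[unfolded noetherian_rs_iff_wf]
proof (induction w rule: wf_induct_rule)
  case (less w)
  show ?case
  proof (cases "rs_irreducible X R w")
    case False
    then obtain v where v: "(w, v) \<in> rstep X R"
      unfolding rs_irreducible_def by auto
    with less obtain n where "(v, n) \<in> (rstep X R)\<^sup>*" "rs_irreducible X R n"
      by auto
    with v show ?thesis
      by (meson converse_rtrancl_into_rtrancl)
  qed auto
qed

lemma rs_irreducible_rtrancl_eq:
  "(u, w) \<in> (rstep X R)\<^sup>* \<Longrightarrow> rs_irreducible X R u \<Longrightarrow> w = u"
  by (erule converse_rtranclE) (auto simp: rs_irreducible_def)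

lemma rs_irreducible_no_lhs:
  "rs_irreducible X R (w1 @ u @ w2) \<Longrightarrow> (u, v) \<in> R \<Longrightarrow> w1 \<in> lists X \<Longrightarrow> w2 \<in> lists X \<Longrightarrow> False"
  unfolding rs_irreducible_def using rstepI by blast

lemma confluent_rs_conversion_joinable:
  assumes "confluent_rs X R" and "(u, v) \<in> (rstep X R \<union> (rstep X R)\<inverse>)\<^sup>*"
  shows "\<exists>w. (u, w) \<in> (rstep X R)\<^sup>* \<and> (v, w) \<in> (rstep X R)\<^sup>*"
  using assms(2)
proof induction
  case (step v v')
  then obtain w where w: "(u, w) \<in> (rstep X R)\<^sup>*" "(v, w) \<in> (rstep X R)\<^sup>*"
    by auto
  from step(2) show ?case
  proof
    assume "(v, v') \<in> rstep X R"
    then obtain w' where "(w, w') \<in> (rstep X R)\<^sup>*" "(v', w') \<in> (rstep X R)\<^sup>*"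
      using assms(1) w(2) unfolding confluent_rs_def by blast
    then show ?thesis
      using w(1) by (meson rtrancl_trans)
  next
    assume "(v, v') \<in> (rstep X R)\<inverse>"
    then show ?thesis
      using w by (meson converse_rtrancl_into_rtrancl converseD)
  qed
qed auto

lemma conversion_in_context:
  assumes "(a, a') \<in> (rstep X R \<union> (rstep X R)\<inverse>)\<^sup>*" and "c \<in> lists X" and "d \<in> lists X"
  shows "(d @ a @ c, d @ a' @ c) \<in> (rstep X R \<union> (rstep X R)\<inverse>)\<^sup>*"
  using assms(1)
proof induction
  case (step y z)
  then have "(d @ y @ c, d @ z @ c) \<in> rstep X R \<union> (rstep X R)\<inverse>"
    using rstep_in_context[OF _ assms(3,2)] by auto
  with step(3) show ?case
    by (rule rtrancl_into_rtrancl)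
qed auto

lemma conversion_sym:
  "(a, b) \<in> (r \<union> r\<inverse>)\<^sup>* \<Longrightarrow> (b, a) \<in> (r \<union> r\<inverse>)\<^sup>*"
  using sym_rtrancl[OF sym_Un_converse] by (rule symD)

section \<open>Normal form presentations\<close>

text \<open>Confluence is not demanded: it follows from the injectivity of \<open>e\<close> on irreducible words.\<close>

definition nf_presentation ::
    "('a, 'm) monoid_scheme \<Rightarrow> 'z set \<Rightarrow> ('z list \<times> 'z list) set \<Rightarrow> ('z list \<Rightarrow> 'a) \<Rightarrow> bool" where
  "nf_presentation S X R e \<longleftrightarrow> finite X \<and> finite R \<and> rewriting_system X R \<and> noetherian_rs X R \<and>
    (\<forall>w\<in>words_plus X. e w \<in> carrier S) \<and> carrier S \<subseteq> e ` words_plus X \<and>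
    (\<forall>u\<in>words_plus X. \<forall>v\<in>words_plus X. e (u @ v) = e u \<otimes>\<^bsub>S\<^esub> e v) \<and>
    (\<forall>(u, v)\<in>R. e u = e v) \<and>
    (\<forall>u\<in>words_plus X. \<forall>v\<in>words_plus X.
       rs_irreducible X R u \<longrightarrow> rs_irreducible X R v \<longrightarrow> e u = e v \<longrightarrow> u = v)"

lemma nf_presentation_rstep_eq:
  assumes pres: "nf_presentation S X R e" and step: "(u, v) \<in> rstep X R"
  shows "e u = e v"
proof -
  obtain w1 u0 v0 w2 where uv: "u = w1 @ u0 @ w2" "v = w1 @ v0 @ w2" and rule: "(u0, v0) \<in> R"
    and w: "w1 \<in> lists X" "w2 \<in> lists X"
    using step unfolding rstep_def by blast
  have hom: "\<And>a b. a \<in> words_plus X \<Longrightarrow> b \<in> words_plus X \<Longrightarrow> e (a @ b) = e a \<otimes>\<^bsub>S\<^esub> e b"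
    and rule_eq: "e u0 = e v0" and uv0: "u0 \<in> words_plus X" "v0 \<in> words_plus X"
    using pres rule unfolding nf_presentation_def rewriting_system_def by auto
  have right: "e (u0 @ w2) = e (v0 @ w2)"
    using w(2) hom uv0 rule_eq by (cases "w2 = []") (auto simp: words_plus_def)
  have "u0 @ w2 \<in> words_plus X" "v0 @ w2 \<in> words_plus X"
    using uv0 w unfolding words_plus_def by auto
  then show ?thesis
    using w(1) hom right uv by (cases "w1 = []") (auto simp: words_plus_def)
qed

lemma nf_presentation_rtrancl_eq:
  "nf_presentation S X R e \<Longrightarrow> (u, v) \<in> (rstep X R)\<^sup>* \<Longrightarrow> e u = e v"
  by (erule rtrancl_induct) (auto dest: nf_presentation_rstep_eq)

lemma nf_presentation_rs_congruence_iff: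
  assumes pres: "nf_presentation S X R e" and u: "u \<in> words_plus X" and v: "v \<in> words_plus X"
  shows "(u, v) \<in> rs_congruence X R \<longleftrightarrow> e u = e v"
proof
  assume "(u, v) \<in> rs_congruence X R"
  then have "(u, v) \<in> (rstep X R \<union> (rstep X R)\<inverse>)\<^sup>*"
    unfolding rs_congruence_def by auto
  then show "e u = e v"
    by induction (auto dest: nf_presentation_rstep_eq[OF pres])
next
  assume eq: "e u = e v"
  have rs: "rewriting_system X R" and noeth: "noetherian_rs X R"
    using pres unfolding nf_presentation_def by auto
  obtain nu where nu: "(u, nu) \<in> (rstep X R)\<^sup>*" "rs_irreducible X R nu"
    using rs_normal_form_exists[OF noeth] by blast
  obtain nv where nv: "(v, nv) \<in> (rstep X R)\<^sup>*" "rs_irreducible X R nv"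
    using rs_normal_form_exists[OF noeth] by blast
  have "nu \<in> words_plus X" "nv \<in> words_plus X"
    using rtrancl_rstep_words_plus[OF rs] nu nv u v by auto
  moreover have "e nu = e nv"
    using nf_presentation_rtrancl_eq[OF pres] nu(1) nv(1) eq by metis
  ultimately have "nu = nv"
    using pres nu(2) nv(2) unfolding nf_presentation_def by auto
  have "(u, nu) \<in> (rstep X R \<union> (rstep X R)\<inverse>)\<^sup>*" "(v, nv) \<in> (rstep X R \<union> (rstep X R)\<inverse>)\<^sup>*"
    using nu(1) nv(1) by (auto intro: rtrancl_mono[THEN subsetD])
  then have "(u, v) \<in> (rstep X R \<union> (rstep X R)\<inverse>)\<^sup>*"
    using \<open>nu = nv\<close> by (metis conversion_sym rtrancl_trans)
  then show "(u, v) \<in> rs_congruence X R"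
    using u v unfolding rs_congruence_def by auto
qed

lemma nf_presentation_confluent:
  assumes pres: "nf_presentation S X R e"
  shows "confluent_rs X R"
  unfolding confluent_rs_def
proof safe
  fix u v v'
  assume uv: "(u, v) \<in> (rstep X R)\<^sup>*" "(u, v') \<in> (rstep X R)\<^sup>*"
  have rs: "rewriting_system X R" and noeth: "noetherian_rs X R"
    using pres unfolding nf_presentation_def by auto
  show "\<exists>w. (v, w) \<in> (rstep X R)\<^sup>* \<and> (v', w) \<in> (rstep X R)\<^sup>*"
  proof (cases "u \<in> words_plus X")
    case True
    obtain n where n: "(v, n) \<in> (rstep X R)\<^sup>*" "rs_irreducible X R n"
      using rs_normal_form_exists[OF noeth] by blast
    obtain n' where n': "(v', n') \<in> (rstep X R)\<^sup>*" "rs_irreducible X R n'"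
      using rs_normal_form_exists[OF noeth] by blast
    have "(u, n) \<in> (rstep X R)\<^sup>*" "(u, n') \<in> (rstep X R)\<^sup>*"
      using uv n n' by auto
    then have "n \<in> words_plus X" "n' \<in> words_plus X" "e n = e n'"
      using rtrancl_rstep_words_plus[OF rs] True nf_presentation_rtrancl_eq[OF pres] by metis+
    then have "n = n'"
      using pres n(2) n'(2) unfolding nf_presentation_def by auto
    then show ?thesis
      using n n' by auto
  next
    case False
    then have "rs_irreducible X R u"
      unfolding rs_irreducible_def using rstep_words_plus[OF rs] by blast
    then show ?thesis
      using uv rs_irreducible_rtrancl_eq by metis
  qed
qed

lemma equiv_rs_congruence: "equiv (words_plus X) (rs_congruence X R)"
proof (rule equivI)
  show "rs_congruence X R \<subseteq> words_plus X \<times> words_plus X"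
    unfolding rs_congruence_def by auto
  show "refl_on (words_plus X) (rs_congruence X R)"
    unfolding rs_congruence_def by (rule refl_onI) auto
  show "sym (rs_congruence X R)"
  proof (rule symI)
    fix a b
    assume "(a, b) \<in> rs_congruence X R"
    then show "(b, a) \<in> rs_congruence X R"
      using conversion_sym[of a b] unfolding rs_congruence_def by blast
  qed
  show "trans (rs_congruence X R)"
  proof (rule transI)
    fix a b c
    assume "(a, b) \<in> rs_congruence X R" "(b, c) \<in> rs_congruence X R"
    then show "(a, c) \<in> rs_congruence X R"
      using rtrancl_trans[of a b "rstep X R \<union> (rstep X R)\<inverse>" c] unfolding rs_congruence_def by blast
  qed
qed

lemma rs_congruence_of_rule:
  assumes "rewriting_system X R" and "(u, v) \<in> R"
  shows "(u, v) \<in> rs_congruence X R"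
proof -
  have step: "(u, v) \<in> rstep X R"
    using assms(2) by (rule rstep_of_rule)
  then have "(u, v) \<in> (rstep X R \<union> (rstep X R)\<inverse>)\<^sup>*"
    by blast
  then show ?thesis
    using rstep_words_plus[OF assms(1) step] unfolding rs_congruence_def by blast
qed

lemma rs_semigroup_mult_class:
  assumes u: "u \<in> words_plus X" and v: "v \<in> words_plus X"
  shows "rs_congruence X R `` {u} \<otimes>\<^bsub>rs_semigroup X R\<^esub> rs_congruence X R `` {v}
           = rs_congruence X R `` {u @ v}"
proof -
  let ?C = "rs_congruence X R" and ?conv = "(rstep X R \<union> (rstep X R)\<inverse>)\<^sup>*"
  define a where "a = (SOME a. a \<in> ?C `` {u})"
  define b where "b = (SOME b. b \<in> ?C `` {v})"
  have "a \<in> ?C `` {u}" "b \<in> ?C `` {v}"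
    unfolding a_def b_def using u v equiv_class_self[OF equiv_rs_congruence] by (metis someI)+
  then have ab: "(u, a) \<in> ?conv" "(v, b) \<in> ?conv" "a \<in> words_plus X" "b \<in> words_plus X"
    unfolding rs_congruence_def by auto
  have "(u @ v, a @ v) \<in> ?conv" "(a @ v, a @ b) \<in> ?conv"
    using conversion_in_context[OF ab(1), of v "[]"] conversion_in_context[OF ab(2), of "[]" a]
      ab(3) v unfolding words_plus_def by auto
  then have "(u @ v, a @ b) \<in> ?conv"
    by (rule rtrancl_trans)
  then have "(u @ v, a @ b) \<in> ?C"
    using u v ab(3,4) words_plus_append unfolding rs_congruence_def by blast
  then have "?C `` {a @ b} = ?C `` {u @ v}"
    by (metis equiv_class_eq[OF equiv_rs_congruence])
  then show ?thesis
    unfolding rs_semigroup_def a_def b_def by simp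
qed

lemma nf_presentation_iso_rs_semigroup:
  assumes pres: "nf_presentation S X R e"
  shows "S \<cong> rs_semigroup X R"
proof -
  let ?C = "rs_congruence X R" and ?P = "rs_semigroup X R"
  have e_carrier: "\<And>w. w \<in> words_plus X \<Longrightarrow> e w \<in> carrier S"
    and e_onto: "carrier S \<subseteq> e ` words_plus X"
    and e_append: "\<And>a b. a \<in> words_plus X \<Longrightarrow> b \<in> words_plus X \<Longrightarrow> e (a @ b) = e a \<otimes>\<^bsub>S\<^esub> e b"
    using pres unfolding nf_presentation_def by auto
  define h where "h s = {v \<in> words_plus X. e v = s}" for s
  have class_eq: "?C `` {u} = h (e u)" if "u \<in> words_plus X" for u
    using nf_presentation_rs_congruence_iff[OF pres that] that
    unfolding h_def rs_congruence_def by auto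
  have class_carrier: "?C `` {u} \<in> carrier ?P" if "u \<in> words_plus X" for u
    using that unfolding rs_semigroup_def by (auto intro: quotientI)
  have h_carrier: "h x \<in> carrier ?P" if "x \<in> carrier S" for x
    using that e_onto class_eq class_carrier by auto
  have "h (x \<otimes>\<^bsub>S\<^esub> y) = h x \<otimes>\<^bsub>?P\<^esub> h y" if xy: "x \<in> carrier S" "y \<in> carrier S" for x y
  proof -
    obtain u v where "u \<in> words_plus X" "v \<in> words_plus X" "x = e u" "y = e v"
      using xy e_onto by blast
    then show ?thesis
      using class_eq e_append words_plus_append rs_semigroup_mult_class by metis
  qed
  then have "h \<in> hom S ?P"
    using h_carrier unfolding hom_def by auto
  moreover have "bij_betw h (carrier S) (carrier ?P)"
    unfolding bij_betw_def
  proof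
    show "inj_on h (carrier S)"
    proof (rule inj_onI)
      fix x y
      assume "x \<in> carrier S" "y \<in> carrier S" "h x = h y"
      moreover obtain u where "u \<in> words_plus X" "e u = x"
        using e_onto calculation(1) by blast
      ultimately show "x = y"
        unfolding h_def by auto
    qed
    show "h ` carrier S = carrier ?P"
      using class_eq class_carrier e_carrier e_onto
      unfolding rs_semigroup_def by (auto elim!: quotientE)
  qed
  ultimately show ?thesis
    by (intro is_isoI isoI)
qed

lemma nf_presentation_imp_defined_by_fcrs:
  fixes X :: "nat set"
  assumes pres: "nf_presentation S X R e"
  shows "defined_by_fcrs S"
  using pres nf_presentation_confluent[OF pres] nf_presentation_iso_rs_semigroup[OF pres]
  unfolding defined_by_fcrs_def complete_rs_def nf_presentation_def by blast

lemma rs_semigroup_nf_presentation: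
  assumes fin: "finite X" "finite R" and rs: "rewriting_system X R" and complete: "complete_rs X R"
  shows "nf_presentation (rs_semigroup X R) X R (\<lambda>w. rs_congruence X R `` {w})"
  unfolding nf_presentation_def
proof (intro conjI ballI)
  let ?C = "rs_congruence X R"
  show "finite X" "finite R" "rewriting_system X R"
    using fin rs by auto
  show "noetherian_rs X R"
    using complete unfolding complete_rs_def by auto
  show "?C `` {w} \<in> carrier (rs_semigroup X R)" if "w \<in> words_plus X" for w
    using that unfolding rs_semigroup_def by (auto intro: quotientI)
  show "carrier (rs_semigroup X R) \<subseteq> (\<lambda>w. ?C `` {w}) ` words_plus X"
    unfolding rs_semigroup_def by (auto elim!: quotientE)
  show "?C `` {u @ v} = ?C `` {u} \<otimes>\<^bsub>rs_semigroup X R\<^esub> ?C `` {v}"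
    if "u \<in> words_plus X" "v \<in> words_plus X" for u v
    using rs_semigroup_mult_class[OF that] by simp
  show "case p of (u, v) \<Rightarrow> ?C `` {u} = ?C `` {v}" if "p \<in> R" for p
  proof (cases p)
    case (Pair u v)
    then have "(u, v) \<in> ?C"
      using that rs_congruence_of_rule[OF rs] by simp
    then show ?thesis
      using Pair equiv_class_eq[OF equiv_rs_congruence] by simp
  qed
  show "rs_irreducible X R u \<longrightarrow> rs_irreducible X R v \<longrightarrow> ?C `` {u} = ?C `` {v} \<longrightarrow> u = v"
    if u: "u \<in> words_plus X" and v: "v \<in> words_plus X" for u v
  proof (intro impI)
    assume irreducible: "rs_irreducible X R u" "rs_irreducible X R v" and "?C `` {u} = ?C `` {v}"
    then have "(u, v) \<in> (rstep X R \<union> (rstep X R)\<inverse>)\<^sup>*"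
      using v equiv_class_self[OF equiv_rs_congruence] unfolding rs_congruence_def by blast
    then obtain w where "(u, w) \<in> (rstep X R)\<^sup>*" "(v, w) \<in> (rstep X R)\<^sup>*"
      using confluent_rs_conversion_joinable complete unfolding complete_rs_def by metis
    then show "u = v"
      using rs_irreducible_rtrancl_eq irreducible by metis
  qed
qed

lemma nf_presentation_iso:
  assumes pres: "nf_presentation S X R e" and h: "h \<in> iso S S'"
  shows "nf_presentation S' X R (h \<circ> e)"
proof -
  have h_carrier: "\<And>a. a \<in> carrier S \<Longrightarrow> h a \<in> carrier S'"
    and h_mult: "\<And>a b. a \<in> carrier S \<Longrightarrow> b \<in> carrier S \<Longrightarrow> h (a \<otimes>\<^bsub>S\<^esub> b) = h a \<otimes>\<^bsub>S'\<^esub> h b"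
    and h_inj: "inj_on h (carrier S)" and h_onto: "h ` carrier S = carrier S'"
    using h unfolding iso_def hom_def bij_betw_def by auto
  have e_carrier: "\<And>w. w \<in> words_plus X \<Longrightarrow> e w \<in> carrier S"
    and e_onto: "carrier S \<subseteq> e ` words_plus X"
    using pres unfolding nf_presentation_def by auto
  show ?thesis
    using pres unfolding nf_presentation_def
  proof (intro conjI ballI; (elim conjE)?)
    show "carrier S' \<subseteq> (h \<circ> e) ` words_plus X"
      using h_onto e_onto by (auto simp: image_comp[symmetric])
    show "(h \<circ> e) w \<in> carrier S'" if "w \<in> words_plus X" for w
      using h_carrier e_carrier that by simp
    show "rs_irreducible X R u \<longrightarrow> rs_irreducible X R v \<longrightarrow> (h \<circ> e) u = (h \<circ> e) v \<longrightarrow> u = v"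
      if "u \<in> words_plus X" "v \<in> words_plus X"
        and "\<forall>u\<in>words_plus X. \<forall>v\<in>words_plus X.
               rs_irreducible X R u \<longrightarrow> rs_irreducible X R v \<longrightarrow> e u = e v \<longrightarrow> u = v" for u v
      using that h_inj e_carrier unfolding inj_on_def by auto
  qed (auto simp: h_mult e_carrier split: prod.splits)
qed

lemma defined_by_fcrs_imp_nf_presentation:
  assumes semigroup: "is_semigroup S" and fcrs: "defined_by_fcrs S"
  shows "\<exists>(X::nat set) R e. nf_presentation S X R e"
proof -
  obtain X :: "nat set" and R where fin: "finite X" "finite R" and rs: "rewriting_system X R"
    and complete: "complete_rs X R" and "S \<cong> rs_semigroup X R"
    using fcrs unfolding defined_by_fcrs_def by blast
  then obtain h where "h \<in> iso S (rs_semigroup X R)"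
    unfolding is_iso_def by auto
  then have "inv_into (carrier S) h \<in> iso (rs_semigroup X R) S"
    using iso_inv_into_closed semigroup unfolding is_semigroup_def by blast
  then show ?thesis
    using nf_presentation_iso[OF rs_semigroup_nf_presentation[OF fin rs complete]] by blast
qed

definition map_rules :: "('x \<Rightarrow> 'y) \<Rightarrow> ('x list \<times> 'x list) set \<Rightarrow> ('y list \<times> 'y list) set" where
  "map_rules f R = map_prod (map f) (map f) ` R"

lemma rstep_map_rules:
  assumes "inj f"
  shows "rstep (f ` X) (map_rules f R) = map_prod (map f) (map f) ` rstep X R"
proof (rule equalityI; rule subsetI)
  fix p
  assume "p \<in> rstep (f ` X) (map_rules f R)"
  then obtain w1 u v w2 where p: "p = (w1 @ u @ w2, w1 @ v @ w2)" and "(u, v) \<in> map_rules f R"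
    and w: "w1 \<in> lists (f ` X)" "w2 \<in> lists (f ` X)"
    unfolding rstep_def by blast
  moreover from this(2) obtain u0 v0 where "(u0, v0) \<in> R" "u = map f u0" "v = map f v0"
    unfolding map_rules_def by auto
  moreover from w obtain w1' w2' where "w1' \<in> lists X" "w2' \<in> lists X" "w1 = map f w1'" "w2 = map f w2'"
    unfolding lists_image by auto
  ultimately show "p \<in> map_prod (map f) (map f) ` rstep X R"
    by (auto intro!: image_eqI[where x="(w1' @ u0 @ w2', w1' @ v0 @ w2')"] rstepI)
next
  fix p
  assume "p \<in> map_prod (map f) (map f) ` rstep X R"
  then obtain a b where "p = (map f a, map f b)" "(a, b) \<in> rstep X R"
    by auto
  then obtain w1 u v w2 where "p = (map f (w1 @ u @ w2), map f (w1 @ v @ w2))" "(u, v) \<in> R"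
    "w1 \<in> lists X" "w2 \<in> lists X"
    unfolding rstep_def by blast
  moreover have "(map f u, map f v) \<in> map_rules f R"
    using calculation(2) unfolding map_rules_def by auto
  ultimately show "p \<in> rstep (f ` X) (map_rules f R)"
    using rstepI[of "map f u" "map f v" "map_rules f R" "map f w1" "f ` X" "map f w2"]
    unfolding lists_image by auto
qed

lemma nf_presentation_rename:
  assumes pres: "nf_presentation S X R e" and f: "inj f"
  shows "nf_presentation S (f ` X) (map_rules f R) (e \<circ> map (inv_into UNIV f))"
proof -
  let ?e' = "e \<circ> map (inv_into UNIV f)"
  have inv_comp [simp]: "inv_into UNIV f \<circ> f = id"
    using f by (rule inv_o_cancel)
  have words: "words_plus (f ` X) = map f ` words_plus X"
    unfolding words_plus_def lists_image by auto
  have steps: "rstep (f ` X) (map_rules f R) = map_prod (map f) (map f) ` rstep X R"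
    using rstep_map_rules[OF f] .
  have inj_map: "inj (map f)"
    using f by (simp add: inj_mapI)
  have irreducible_map: "rs_irreducible (f ` X) (map_rules f R) (map f u) \<longleftrightarrow> rs_irreducible X R u" for u
    unfolding rs_irreducible_def steps using inj_map by (auto dest: injD)
  have "\<nexists>g::nat \<Rightarrow> _. \<forall>i. (g i, g (Suc i)) \<in> rstep (f ` X) (map_rules f R)"
  proof
    assume "\<exists>g::nat \<Rightarrow> _. \<forall>i. (g i, g (Suc i)) \<in> rstep (f ` X) (map_rules f R)"
    then obtain g :: "nat \<Rightarrow> _" where g: "\<forall>i. (g i, g (Suc i)) \<in> rstep (f ` X) (map_rules f R)"
      by blast
    let ?g' = "\<lambda>i. map (inv_into UNIV f) (g i)"
    have "(?g' i, ?g' (Suc i)) \<in> rstep X R" for i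
    proof -
      obtain a b where "(a, b) \<in> rstep X R" "g i = map f a" "g (Suc i) = map f b"
        using g[unfolded steps] by fast
      then show ?thesis
        by simp
    qed
    then have "\<exists>h. \<forall>i. (h i, h (Suc i)) \<in> rstep X R"
      by (intro exI[of _ ?g']) blast
    then show False
      using pres unfolding nf_presentation_def noetherian_rs_def by blast
  qed
  moreover have "rewriting_system (f ` X) (map_rules f R)"
    using pres unfolding nf_presentation_def rewriting_system_def map_rules_def words by auto
  moreover have "\<forall>w\<in>words_plus (f ` X). ?e' w \<in> carrier S"
    and "carrier S \<subseteq> ?e' ` words_plus (f ` X)"
    using pres unfolding nf_presentation_def words by (auto simp: image_comp)
  moreover have "\<forall>(u, v)\<in>map_rules f R. ?e' u = ?e' v"
    using pres unfolding nf_presentation_def map_rules_def by fastforce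
  moreover have "\<forall>u\<in>words_plus (f ` X). \<forall>v\<in>words_plus (f ` X). ?e' (u @ v) = ?e' u \<otimes>\<^bsub>S\<^esub> ?e' v"
    using pres unfolding nf_presentation_def words by (auto simp flip: map_append)
  moreover have "\<forall>u\<in>words_plus (f ` X). \<forall>v\<in>words_plus (f ` X).
      rs_irreducible (f ` X) (map_rules f R) u \<longrightarrow> rs_irreducible (f ` X) (map_rules f R) v \<longrightarrow>
      ?e' u = ?e' v \<longrightarrow> u = v"
    using pres unfolding nf_presentation_def words by (auto simp: irreducible_map)
  ultimately show ?thesis
    using pres unfolding nf_presentation_def noetherian_rs_def map_rules_def by auto
qed

lemma nf_presentation_imp_defined_by_fcrs_countable:
  fixes X :: "'x::countable set"
  assumes "nf_presentation S X R e"
  shows "defined_by_fcrs S"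
  using nf_presentation_imp_defined_by_fcrs[OF nf_presentation_rename[OF assms inj_to_nat]] .

section \<open>Blocks of a word\<close>

text \<open>The letters mapped to \<open>None\<close> cut a word into blocks; empty blocks are kept, so a word
  with \<open>k\<close> cutting letters has \<open>k + 1\<close> blocks.\<close>

fun blocks :: "('z \<Rightarrow> 'b option) \<Rightarrow> 'z list \<Rightarrow> 'b list list" where
  "blocks f [] = [[]]"
| "blocks f (z # w) = (case f z of
     None \<Rightarrow> [] # blocks f w
   | Some b \<Rightarrow> (b # hd (blocks f w)) # tl (blocks f w))"

lemma blocks_not_Nil [simp]: "blocks f w \<noteq> []"
  by (cases w) (auto split: option.splits)

lemma blocks_append:
  "blocks f (a @ b) = butlast (blocks f a) @ [last (blocks f a) @ hd (blocks f b)] @ tl (blocks f b)"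
proof (induction a)
  case (Cons z a)
  obtain c cs where "blocks f a = c # cs"
    using blocks_not_Nil by (metis list.exhaust)
  with Cons show ?case
    by (cases "f z"; cases cs) auto
qed simp

lemma blocks_all_Some: "\<forall>z\<in>set u. f z \<noteq> None \<Longrightarrow> blocks f u = [map (the \<circ> f) u]"
  by (induction u) (auto split: option.splits)

lemma blocks_all_None: "\<forall>z\<in>set u. f z = None \<Longrightarrow> blocks f u = replicate (Suc (length u)) []"
  by (induction u) auto

lemma set_blocks_subset: "b \<in> set (blocks f w) \<Longrightarrow> set b \<subseteq> {x. \<exists>z\<in>set w. f z = Some x}"
proof (induction w arbitrary: b)
  case (Cons z w)
  obtain c cs where cs: "blocks f w = c # cs"
    using blocks_not_Nil by (metis list.exhaust)
  show ?case
  proof (cases "f z")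
    case None
    then show ?thesis
      using Cons cs by fastforce
  next
    case (Some y)
    then have "b = y # c \<or> b \<in> set cs"
      using Cons.prems cs by auto
    then show ?thesis
      using Cons.IH[of c] Cons.IH[of b] cs Some by fastforce
  qed
qed simp

lemma blocks_append_Some:
  "\<forall>z\<in>set u. f z \<noteq> None \<Longrightarrow> blocks f (w1 @ u @ w2) =
     butlast (blocks f w1) @ [last (blocks f w1) @ map (the \<circ> f) u @ hd (blocks f w2)] @ tl (blocks f w2)"
  by (simp add: blocks_append[of f w1] blocks_append[of f u] blocks_all_Some)

lemma blocks_append_None:
  assumes "\<forall>z\<in>set u. f z = None" and "u \<noteq> []"
  shows "blocks f (w1 @ u @ w2) = butlast (blocks f w1) @ [last (blocks f w1)] @
           replicate (length u - 1) [] @ [hd (blocks f w2)] @ tl (blocks f w2)"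
proof -
  obtain n where n: "length u = Suc n"
    using assms(2) by (cases u) auto
  have "[] # butlast (replicate m []) = replicate m []" if "0 < m" for m :: nat
    using that by (induction m) (auto simp: butlast_append)
  then show ?thesis
    using assms(1) n by (auto simp: blocks_append[of f w1] blocks_append[of f u] blocks_all_None butlast_append)
qed

lemma blocks_append_None_Some:
  "f z1 = None \<Longrightarrow> f z2 = Some y \<Longrightarrow> blocks f (w1 @ [z1, z2] @ w2) =
     butlast (blocks f w1) @ [last (blocks f w1)] @ [y # hd (blocks f w2)] @ tl (blocks f w2)"
  by (simp add: blocks_append[of f w1])

lemma blocks_append_Some_None:
  "f z1 = Some y \<Longrightarrow> f z2 = None \<Longrightarrow> blocks f (w1 @ [z1, z2] @ w2) =
     butlast (blocks f w1) @ [last (blocks f w1) @ [y]] @ [hd (blocks f w2)] @ tl (blocks f w2)"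
  by (simp add: blocks_append[of f w1])

definition nonempty_mset :: "'b list list \<Rightarrow> 'b list multiset" where
  "nonempty_mset bs = mset (filter (\<lambda>b. b \<noteq> []) bs)"

lemma nonempty_mset_blocks_append_None:
  assumes "\<forall>z\<in>set u. f z = None" and "u \<noteq> []"
  shows "nonempty_mset (blocks f (w1 @ u @ w2)) =
           nonempty_mset (butlast (blocks f w1) @ [last (blocks f w1), hd (blocks f w2)] @ tl (blocks f w2))"
proof -
  have "filter (\<lambda>b. b \<noteq> []) (replicate n []) = []" for n :: nat
    by (induction n) auto
  then show ?thesis
    unfolding nonempty_mset_def blocks_append_None[OF assms] by simp
qed

lemma mult_nonempty_mset_replace:
  assumes "a \<noteq> []" and "\<forall>k\<in>set ks. k \<noteq> [] \<longrightarrow> (k, a) \<in> r"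
  shows "(nonempty_mset (A @ ks @ B), nonempty_mset (A @ [a] @ B)) \<in> Multiset.mult r"
proof -
  let ?F = nonempty_mset
  have "(?F A + ?F B + ?F ks, ?F A + ?F B + {#a#}) \<in> Multiset.mult r"
    using assms unfolding nonempty_mset_def by (intro one_step_implies_mult) auto
  moreover have "?F (A @ ks @ B) = ?F A + ?F B + ?F ks" "?F (A @ [a] @ B) = ?F A + ?F B + {#a#}"
    using assms(1) unfolding nonempty_mset_def by (simp_all add: add_ac)
  ultimately show ?thesis
    by simp
qed

lemma mixed_word_contains_border:
  assumes "w \<in> lists (Inl ` X \<union> Inr ` Y)" and "\<exists>z\<in>set w. isl z" and "\<exists>z\<in>set w. \<not> isl z"
  shows "\<exists>w1 w2 x y. x \<in> X \<and> y \<in> Y \<and> (w = w1 @ [Inl x, Inr y] @ w2 \<or> w = w1 @ [Inr y, Inl x] @ w2)"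
  using assms
proof (induction w rule: list.induct)
  case (Cons z w)
  show ?case
  proof (cases "(\<exists>z\<in>set w. isl z) \<and> (\<exists>z\<in>set w. \<not> isl z)")
    case True
    then obtain w1 w2 x y where "x \<in> X" "y \<in> Y"
      "w = w1 @ [Inl x, Inr y] @ w2 \<or> w = w1 @ [Inr y, Inl x] @ w2"
      using Cons.IH Cons.prems(1) by auto
    then show ?thesis
      by (intro exI[of _ "z # w1"] exI[of _ w2] exI[of _ x] exI[of _ y]) auto
  next
    case False
    then obtain z' w' where w: "w = z' # w'" "isl z' \<noteq> isl z"
      using Cons.prems by (cases w) auto
    have z: "z \<in> Inl ` X \<union> Inr ` Y" "z' \<in> Inl ` X \<union> Inr ` Y"
      using Cons.prems(1) w(1) by simp_all
    show ?thesis
    proof (cases z)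
      case (Inl x)
      with w(2) obtain y where "z' = Inr y"
        by (cases z') auto
      with Inl z have "x \<in> X" "y \<in> Y" "z # w = [] @ [Inl x, Inr y] @ w'"
        using w(1) by auto
      then show ?thesis
        by blast
    next
      case (Inr y)
      with w(2) obtain x where "z' = Inl x"
        by (cases z') auto
      with Inr z have "x \<in> X" "y \<in> Y" "z # w = [] @ [Inr y, Inl x] @ w'"
        using w(1) by auto
      then show ?thesis
        by blast
    qed
  qed
qed simp

lemma lists_Inl_Inr_cases:
  assumes w: "w \<in> lists (Inl ` X \<union> Inr ` Y)"
  obtains (Inl) "w \<in> lists (Inl ` X)" | (Inr) "w \<in> lists (Inr ` Y)"
  | (border) w1 w2 x y where "x \<in> X" "y \<in> Y" "w = w1 @ [Inl x, Inr y] @ w2 \<or> w = w1 @ [Inr y, Inl x] @ w2"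
proof (cases "(\<exists>z\<in>set w. isl z) \<and> (\<exists>z\<in>set w. \<not> isl z)")
  case True
  then show thesis
    using mixed_word_contains_border[OF w] border by blast
next
  case False
  then consider "\<forall>z\<in>set w. isl z" | "\<forall>z\<in>set w. \<not> isl z"
    by blast
  then show thesis
  proof cases
    case 1
    then have "w \<in> lists (Inl ` X)"
      using w by (intro in_listsI) (metis UnE image_iff in_listsD sum.disc(1,2))
    then show thesis
      by (rule Inl)
  next
    case 2
    then have "w \<in> lists (Inr ` Y)"
      using w by (intro in_listsI) (metis UnE image_iff in_listsD sum.disc(1,2))
    then show thesis
      by (rule Inr)
  qed
qed

section \<open>Reduction combined with passing to a factor\<close>

definition reduct_or_factor :: "'x set \<Rightarrow> ('x list \<times> 'x list) set \<Rightarrow> ('x list \<times> 'x list) set" where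
  "reduct_or_factor X R =
     (rstep X R)\<inverse> \<union> {(b, p @ b @ q) | p b q. p @ b @ q \<in> lists X \<and> p @ q \<noteq> []}"

lemma reduct_or_factorI:
  "p @ b @ q \<in> lists X \<Longrightarrow> p @ q \<noteq> [] \<Longrightarrow> (b, p @ b @ q) \<in> reduct_or_factor X R"
  unfolding reduct_or_factor_def by blast

lemma factors_accessible:
  assumes noeth: "noetherian_rs X R" and rs: "rewriting_system X R" and C: "C \<in> lists X"
  shows "C = p @ B @ q \<Longrightarrow> B \<in> Wellfounded.acc (reduct_or_factor X R)"
  using noeth[unfolded noetherian_rs_iff_wf] C
proof (induction C arbitrary: p B q rule: wf_induct_rule)
  case (less C)
  from less.prems(1) show ?case
  proof (induction "length B" arbitrary: B p q rule: less_induct)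
    case less_B: less
    show ?case
    proof (rule accI)
      fix B'
      assume "(B', B) \<in> reduct_or_factor X R"
      then consider "(B, B') \<in> rstep X R" | p' q' where "B = p' @ B' @ q'" "p' @ q' \<noteq> []"
        unfolding reduct_or_factor_def by blast
      then show "B' \<in> Wellfounded.acc (reduct_or_factor X R)"
      proof cases
        case 1
        have pq: "p \<in> lists X" "q \<in> lists X"
          using less.prems(2) less_B.prems by auto
        have "(C, p @ B' @ q) \<in> rstep X R"
          using rstep_in_context[OF 1 pq] less_B.prems by simp
        moreover have "p @ B' @ q \<in> lists X"
          using pq rstep_words_plus[OF rs 1] unfolding words_plus_def by auto
        ultimately show ?thesis
          using less.IH by blast
      next
        case 2
        then have "length B' < length B" and "C = (p @ p') @ B' @ (q' @ q)"
          using less_B.prems by auto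
        then show ?thesis
          using less_B.hyps by blast
      qed
    qed
  qed
qed

lemma wf_reduct_or_factor:
  assumes noeth: "noetherian_rs X R" and rs: "rewriting_system X R"
  shows "wf (reduct_or_factor X R)"
proof (rule acc_wfI, rule allI)
  fix B
  show "B \<in> Wellfounded.acc (reduct_or_factor X R)"
  proof (cases "B \<in> lists X")
    case True
    then show ?thesis
      using factors_accessible[OF noeth rs True, of "[]" B "[]"] by simp
  next
    case False
    show ?thesis
    proof (rule accI)
      fix B'
      assume "(B', B) \<in> reduct_or_factor X R"
      with False show "B' \<in> Wellfounded.acc (reduct_or_factor X R)"
        using rstep_words_plus[OF rs, of B B'] unfolding reduct_or_factor_def words_plus_def by auto
    qed
  qed
qed

text \<open>The empty product is left \<open>undefined\<close>; only nonempty words are ever evaluated.\<close>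

fun word_prod :: "('a, 'm) monoid_scheme \<Rightarrow> ('z \<Rightarrow> 'a) \<Rightarrow> 'z list \<Rightarrow> 'a" where
  "word_prod S f [] = undefined"
| "word_prod S f [z] = f z"
| "word_prod S f (z # z' # w) = f z \<otimes>\<^bsub>S\<^esub> word_prod S f (z' # w)"

lemma word_prod_Cons: "w \<noteq> [] \<Longrightarrow> word_prod S f (z # w) = f z \<otimes>\<^bsub>S\<^esub> word_prod S f w"
  by (cases w) auto

lemma word_prod_map: "word_prod S f (map g w) = word_prod S (f \<circ> g) w"
  by (induction w rule: induct_list012) auto

lemma word_prod_closed:
  assumes "is_semigroup S" and "w \<noteq> []" and "\<forall>z\<in>set w. f z \<in> carrier S"
  shows "word_prod S f w \<in> carrier S"
  using assms(2,3)
  by (induction w rule: induct_list012) (use assms(1) in \<open>auto simp: is_semigroup_def\<close>)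

lemma word_prod_append:
  assumes semigroup: "is_semigroup S" and "a \<noteq> []" and "b \<noteq> []"
    and "\<forall>z\<in>set a. f z \<in> carrier S" and "\<forall>z\<in>set b. f z \<in> carrier S"
  shows "word_prod S f (a @ b) = word_prod S f a \<otimes>\<^bsub>S\<^esub> word_prod S f b"
  using assms(2-5)
proof (induction a)
  case (Cons z a)
  show ?case
  proof (cases "a = []")
    case False
    have "word_prod S f (z # a @ b) = f z \<otimes>\<^bsub>S\<^esub> (word_prod S f a \<otimes>\<^bsub>S\<^esub> word_prod S f b)"
      using Cons False by (simp add: word_prod_Cons)
    also have "\<dots> = (f z \<otimes>\<^bsub>S\<^esub> word_prod S f a) \<otimes>\<^bsub>S\<^esub> word_prod S f b"
      using semigroup word_prod_closed[OF semigroup False] word_prod_closed[OF semigroup Cons.prems(2)] Cons.prems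
      unfolding is_semigroup_def by (metis list.set_intros)
    finally show ?thesis
      using False by (simp add: word_prod_Cons)
  qed (use Cons in \<open>simp add: word_prod_Cons\<close>)
qed simp

section \<open>The presentation of an ideal extension\<close>

locale ideal_extension =
  fixes S :: "'a monoid" and T' :: "'a set"
    and X :: "'x set" and R :: "('x list \<times> 'x list) set" and eT :: "'x list \<Rightarrow> 'a"
    and Y :: "'y set" and Q :: "('y list \<times> 'y list) set" and eU :: "'y list \<Rightarrow> 'a set"
  assumes semigroup: "is_semigroup S" and ideal: "semigroup_ideal T' S"
    and pres_T: "nf_presentation \<lparr>carrier = T', mult = mult S, one = one S\<rparr> X R eT"
    and pres_U: "nf_presentation (rees_quotient S T') Y Q eU"
begin

lemma ideal_subset: "T' \<subseteq> carrier S" and ideal_nonempty: "T' \<noteq> {}"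
  and ideal_mult_left: "s \<in> carrier S \<Longrightarrow> t \<in> T' \<Longrightarrow> s \<otimes>\<^bsub>S\<^esub> t \<in> T'"
  and ideal_mult_right: "s \<in> carrier S \<Longrightarrow> t \<in> T' \<Longrightarrow> t \<otimes>\<^bsub>S\<^esub> s \<in> T'"
  using ideal unfolding semigroup_ideal_def by auto

lemma eT_in_ideal: "w \<in> words_plus X \<Longrightarrow> eT w \<in> T'"
  and ideal_subset_eT_image: "T' \<subseteq> eT ` words_plus X"
  and eT_append: "u \<in> words_plus X \<Longrightarrow> v \<in> words_plus X \<Longrightarrow> eT (u @ v) = eT u \<otimes>\<^bsub>S\<^esub> eT v"
  and eT_rule: "(u, v) \<in> R \<Longrightarrow> eT u = eT v"
  and eT_irreducible_inj: "u \<in> words_plus X \<Longrightarrow> v \<in> words_plus X \<Longrightarrow>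
     rs_irreducible X R u \<Longrightarrow> rs_irreducible X R v \<Longrightarrow> eT u = eT v \<Longrightarrow> u = v"
  and finite_X: "finite X" and finite_R: "finite R"
  and rewriting_system_R: "rewriting_system X R" and noetherian_R: "noetherian_rs X R"
  using pres_T unfolding nf_presentation_def by auto

lemma eU_in_quotient: "w \<in> words_plus Y \<Longrightarrow> eU w \<in> rees_class T' ` carrier S"
  and quotient_subset_eU_image: "rees_class T' ` carrier S \<subseteq> eU ` words_plus Y"
  and eU_append: "u \<in> words_plus Y \<Longrightarrow> v \<in> words_plus Y \<Longrightarrow>
     eU (u @ v) = eU u \<otimes>\<^bsub>rees_quotient S T'\<^esub> eU v"
  and eU_rule: "(u, v) \<in> Q \<Longrightarrow> eU u = eU v"
  and eU_irreducible_inj: "u \<in> words_plus Y \<Longrightarrow> v \<in> words_plus Y \<Longrightarrow>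
     rs_irreducible Y Q u \<Longrightarrow> rs_irreducible Y Q v \<Longrightarrow> eU u = eU v \<Longrightarrow> u = v"
  and finite_Y: "finite Y" and finite_Q: "finite Q"
  and rewriting_system_Q: "rewriting_system Y Q" and noetherian_Q: "noetherian_rs Y Q"
  using pres_U unfolding nf_presentation_def rees_quotient_def by auto

lemma R_words_plus: "(u, v) \<in> R \<Longrightarrow> u \<in> words_plus X \<and> v \<in> words_plus X"
  using rewriting_system_R unfolding rewriting_system_def by auto

lemma Q_words_plus: "(u, v) \<in> Q \<Longrightarrow> u \<in> words_plus Y \<and> v \<in> words_plus Y"
  using rewriting_system_Q unfolding rewriting_system_def by auto

definition rep :: "'y \<Rightarrow> 'a" where
  "rep y = (SOME s. s \<in> carrier S \<and> rees_class T' s = eU [y])"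

lemma rep: "y \<in> Y \<Longrightarrow> rep y \<in> carrier S \<and> rees_class T' (rep y) = eU [y]"
proof -
  assume "y \<in> Y"
  then have "[y] \<in> words_plus Y"
    unfolding words_plus_def by auto
  then have "\<exists>s. s \<in> carrier S \<and> rees_class T' s = eU [y]"
    using eU_in_quotient by force
  then show ?thesis
    unfolding rep_def by (rule someI_ex)
qed

lemma eT_word_prod: "w \<in> words_plus X \<Longrightarrow> eT w = word_prod S (\<lambda>x. eT [x]) w"
proof (induction w)
  case (Cons x w)
  show ?case
  proof (cases "w = []")
    case False
    then have "w \<in> words_plus X" "[x] \<in> words_plus X"
      using Cons.prems unfolding words_plus_def by auto
    then show ?thesis
      using eT_append[of "[x]" w] Cons False by (simp add: word_prod_Cons)
  qed simp
qed (simp add: words_plus_def)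

lemma eU_word_prod: "w \<in> words_plus Y \<Longrightarrow> eU w = rees_class T' (word_prod S rep w)"
proof (induction w)
  case (Cons y w)
  have y: "y \<in> Y"
    using Cons.prems unfolding words_plus_def by auto
  show ?case
  proof (cases "w = []")
    case False
    then have w: "w \<in> words_plus Y" "[y] \<in> words_plus Y"
      using Cons.prems unfolding words_plus_def by auto
    have prod_carrier: "word_prod S rep w \<in> carrier S"
      using word_prod_closed[OF semigroup False] rep w unfolding words_plus_def by auto
    have "eU (y # w) = eU [y] \<otimes>\<^bsub>rees_quotient S T'\<^esub> eU w"
      using eU_append[OF w(2) w(1)] by simp
    also have "\<dots> = rees_class T' (rep y \<otimes>\<^bsub>S\<^esub> word_prod S rep w)"
      using Cons.IH w rep[OF y] rees_quotient_mult[OF ideal _ prod_carrier] by metis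
    finally show ?thesis
      using False by (simp add: word_prod_Cons)
  qed (use rep[OF y] in simp)
qed (simp add: words_plus_def)

lemma eU_eq_ideal: "w \<in> words_plus Y \<Longrightarrow> eU w = T' \<Longrightarrow> word_prod S rep w \<in> T'"
  using eU_word_prod rees_class_eq_ideal by metis

lemma eU_neq_ideal: "w \<in> words_plus Y \<Longrightarrow> eU w \<noteq> T' \<Longrightarrow> word_prod S rep w \<notin> T'"
  using eU_word_prod unfolding rees_class_def by auto

definition T_word :: "'a \<Rightarrow> 'x list" where
  "T_word t = (SOME w. w \<in> words_plus X \<and> eT w = t)"

lemma T_word: "t \<in> T' \<Longrightarrow> T_word t \<in> words_plus X \<and> eT (T_word t) = t"
proof -
  assume "t \<in> T'"
  then have "\<exists>w. w \<in> words_plus X \<and> eT w = t"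
    using ideal_subset_eT_image by force
  then show ?thesis
    unfolding T_word_def by (rule someI_ex)
qed

definition zero_nf :: "'y list" where
  "zero_nf = (SOME w. w \<in> words_plus Y \<and> eU w = T' \<and> rs_irreducible Y Q w)"

lemma zero_nf: "zero_nf \<in> words_plus Y \<and> eU zero_nf = T' \<and> rs_irreducible Y Q zero_nf"
proof -
  obtain t where "t \<in> T'"
    using ideal_nonempty by auto
  then have "T' = rees_class T' t" "t \<in> carrier S"
    unfolding rees_class_def using ideal_subset by auto
  then obtain w where w: "w \<in> words_plus Y" "eU w = T'"
    using quotient_subset_eU_image by force
  obtain n where n: "(w, n) \<in> (rstep Y Q)\<^sup>*" "rs_irreducible Y Q n"
    using rs_normal_form_exists[OF noetherian_Q] by blast
  have "n \<in> words_plus Y" "eU n = T'"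
    using rtrancl_rstep_words_plus[OF rewriting_system_Q n(1) w(1)]
      nf_presentation_rtrancl_eq[OF pres_U n(1)] w(2) by auto
  with n(2) have "\<exists>w. w \<in> words_plus Y \<and> eU w = T' \<and> rs_irreducible Y Q w"
    by blast
  then show ?thesis
    unfolding zero_nf_def by (rule someI_ex)
qed

definition Z :: "('x + 'y) set" where
  "Z = Inl ` X \<union> Inr ` Y"

definition letter_val :: "'x + 'y \<Rightarrow> 'a" where
  "letter_val = case_sum (\<lambda>x. eT [x]) rep"

definition eZ :: "('x + 'y) list \<Rightarrow> 'a" where
  "eZ = word_prod S letter_val"

lemma letter_val_closed: "z \<in> Z \<Longrightarrow> letter_val z \<in> carrier S"
  using rep eT_in_ideal ideal_subset unfolding Z_def letter_val_def words_plus_def by auto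

lemma eZ_Inl: "w \<in> words_plus X \<Longrightarrow> eZ (map Inl w) = eT w"
  unfolding eZ_def by (simp add: word_prod_map eT_word_prod letter_val_def comp_def)

lemma eZ_Inr: "eZ (map Inr w) = word_prod S rep w"
  unfolding eZ_def by (simp add: word_prod_map letter_val_def comp_def)

lemma eZ_closed: "w \<in> words_plus Z \<Longrightarrow> eZ w \<in> carrier S"
  unfolding eZ_def using word_prod_closed[OF semigroup] letter_val_closed
  unfolding words_plus_def by auto

lemma eZ_append: "u \<in> words_plus Z \<Longrightarrow> v \<in> words_plus Z \<Longrightarrow> eZ (u @ v) = eZ u \<otimes>\<^bsub>S\<^esub> eZ v"
  unfolding eZ_def words_plus_def using letter_val_closed by (intro word_prod_append[OF semigroup]) auto

lemma words_plus_Inl: "w \<in> words_plus X \<Longrightarrow> map Inl w \<in> words_plus Z"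
  unfolding words_plus_def Z_def by auto

lemma words_plus_Inr: "w \<in> words_plus Y \<Longrightarrow> map Inr w \<in> words_plus Z"
  unfolding words_plus_def Z_def by auto

lemma eZ_onto: "carrier S \<subseteq> eZ ` words_plus Z"
proof
  fix s
  assume s: "s \<in> carrier S"
  show "s \<in> eZ ` words_plus Z"
  proof (cases "s \<in> T'")
    case True
    then obtain w where "w \<in> words_plus X" "eT w = s"
      using ideal_subset_eT_image by auto
    then show ?thesis
      using eZ_Inl words_plus_Inl by (metis image_eqI)
  next
    case False
    obtain w where w: "w \<in> words_plus Y" "eU w = rees_class T' s"
      using quotient_subset_eU_image s by force
    then have "word_prod S rep w = s"
      using eU_word_prod rees_class_inj[OF False] by simp
    then show ?thesis
      using eZ_Inr words_plus_Inr w by (metis image_eqI)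
  qed
qed

definition rules_T :: "(('x + 'y) list \<times> ('x + 'y) list) set" where
  "rules_T = map_rules Inl R"

definition rules_U :: "(('x + 'y) list \<times> ('x + 'y) list) set" where
  "rules_U = {(map Inr u, map Inr v) | u v. (u, v) \<in> Q \<and> eU u \<noteq> T'}"

text \<open>The word \<open>zero_nf\<close> is included because it need not contain a left side of \<open>Q\<close>.\<close>

definition rules_zero :: "(('x + 'y) list \<times> ('x + 'y) list) set" where
  "rules_zero = {(map Inr u, map Inl (T_word (word_prod S rep u))) | u.
                   (u \<in> fst ` Q \<or> u = zero_nf) \<and> eU u = T'}"

definition rules_TU :: "(('x + 'y) list \<times> ('x + 'y) list) set" where
  "rules_TU = {([Inl x, Inr y], map Inl (T_word (eT [x] \<otimes>\<^bsub>S\<^esub> rep y))) | x y. x \<in> X \<and> y \<in> Y}"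

definition rules_UT :: "(('x + 'y) list \<times> ('x + 'y) list) set" where
  "rules_UT = {([Inr y, Inl x], map Inl (T_word (rep y \<otimes>\<^bsub>S\<^esub> eT [x]))) | x y. x \<in> X \<and> y \<in> Y}"

definition rules :: "(('x + 'y) list \<times> ('x + 'y) list) set" where
  "rules = rules_T \<union> rules_U \<union> rules_zero \<union> rules_TU \<union> rules_UT"

lemma rules_cases:
  assumes "(u, v) \<in> rules"
  obtains (T) u0 v0 where "(u0, v0) \<in> R" "u = map Inl u0" "v = map Inl v0"
  | (U) u0 v0 where "(u0, v0) \<in> Q" "eU u0 \<noteq> T'" "u = map Inr u0" "v = map Inr v0"
  | (zero) u0 where "u0 \<in> fst ` Q \<or> u0 = zero_nf" "eU u0 = T'"
      "u = map Inr u0" "v = map Inl (T_word (word_prod S rep u0))"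
  | (TU) x y where "x \<in> X" "y \<in> Y" "u = [Inl x, Inr y]" "v = map Inl (T_word (eT [x] \<otimes>\<^bsub>S\<^esub> rep y))"
  | (UT) x y where "x \<in> X" "y \<in> Y" "u = [Inr y, Inl x]" "v = map Inl (T_word (rep y \<otimes>\<^bsub>S\<^esub> eT [x]))"
  using assms unfolding rules_def rules_T_def map_rules_def rules_U_def rules_zero_def rules_TU_def rules_UT_def
  by blast

lemma finite_rules: "finite rules"
proof -
  have "finite rules_T"
    unfolding rules_T_def map_rules_def using finite_R by simp
  moreover have "finite rules_U"
    by (rule finite_subset[OF _ finite_imageI[OF finite_Q, of "map_prod (map Inr) (map Inr)"]])
      (auto simp: rules_U_def)
  moreover have "finite rules_zero"
    by (rule finite_subset[OF _ finite_imageI[of "fst ` Q \<union> {zero_nf}"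
          "\<lambda>u. (map Inr u, map Inl (T_word (word_prod S rep u)))"]])
      (auto simp: rules_zero_def finite_Q)
  moreover have "finite rules_TU"
    by (rule finite_subset[OF _ finite_imageI[OF finite_cartesian_product[OF finite_X finite_Y],
          of "\<lambda>(x, y). ([Inl x, Inr y], map Inl (T_word (eT [x] \<otimes>\<^bsub>S\<^esub> rep y)))"]])
      (auto simp: rules_TU_def)
  moreover have "finite rules_UT"
    by (rule finite_subset[OF _ finite_imageI[OF finite_cartesian_product[OF finite_X finite_Y],
          of "\<lambda>(x, y). ([Inr y, Inl x], map Inl (T_word (rep y \<otimes>\<^bsub>S\<^esub> eT [x])))"]])
      (auto simp: rules_UT_def)
  ultimately show ?thesis
    unfolding rules_def by simp
qed

lemma letter_products_in_ideal:
  assumes "x \<in> X" and "y \<in> Y"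
  shows "eT [x] \<otimes>\<^bsub>S\<^esub> rep y \<in> T'" and "rep y \<otimes>\<^bsub>S\<^esub> eT [x] \<in> T'"
  using ideal_mult_left ideal_mult_right rep eT_in_ideal assms unfolding words_plus_def by auto

lemma zero_rule_lhs:
  assumes "u \<in> fst ` Q \<or> u = zero_nf" and "eU u = T'"
  shows "u \<in> words_plus Y" and "word_prod S rep u \<in> T'"
  using assms Q_words_plus zero_nf eU_eq_ideal by force+

lemma rewriting_system_rules: "rewriting_system Z rules"
  unfolding rewriting_system_def
proof (intro ballI, clarify)
  fix u v
  assume "(u, v) \<in> rules"
  then show "u \<in> words_plus Z \<and> v \<in> words_plus Z"
  proof (cases rule: rules_cases)
    case T
    then show ?thesis
      using R_words_plus words_plus_Inl by auto
  next
    case U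
    then show ?thesis
      using Q_words_plus words_plus_Inr by auto
  next
    case zero
    then show ?thesis
      using zero_rule_lhs words_plus_Inr words_plus_Inl T_word by auto
  next
    case TU
    then show ?thesis
      using letter_products_in_ideal words_plus_Inl T_word unfolding Z_def words_plus_def by force
  next
    case UT
    then show ?thesis
      using letter_products_in_ideal words_plus_Inl T_word unfolding Z_def words_plus_def by force
  qed
qed

lemma eZ_rule:
  assumes "(u, v) \<in> rules"
  shows "eZ u = eZ v"
  using assms
proof (cases rule: rules_cases)
  case (T u0 v0)
  then show ?thesis
    using eT_rule R_words_plus eZ_Inl by auto
next
  case (U u0 v0)
  then have "rees_class T' (word_prod S rep v0) = rees_class T' (word_prod S rep u0)"
    using eU_rule eU_word_prod Q_words_plus by metis
  then show ?thesis
    using U rees_class_inj eU_neq_ideal Q_words_plus eZ_Inr by metis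
next
  case (zero u0)
  then show ?thesis
    using zero_rule_lhs eZ_Inr eZ_Inl T_word by simp
next
  case (TU x y)
  then show ?thesis
    using eZ_Inl T_word letter_products_in_ideal by (simp add: eZ_def letter_val_def)
next
  case (UT x y)
  then show ?thesis
    using eZ_Inl T_word letter_products_in_ideal by (simp add: eZ_def letter_val_def)
qed

lemma irreducible_Inl:
  assumes "rs_irreducible Z rules (map Inl w)"
  shows "rs_irreducible X R w"
  unfolding rs_irreducible_def
proof
  assume "\<exists>w'. (w, w') \<in> rstep X R"
  then obtain w1 u v w2 where "w = w1 @ u @ w2" "(u, v) \<in> R" "w1 \<in> lists X" "w2 \<in> lists X"
    unfolding rstep_def by blast
  moreover have "(map Inl u, map Inl v) \<in> rules"
    using calculation(2) unfolding rules_def rules_T_def map_rules_def by auto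
  moreover have "map Inl w1 \<in> lists Z" "map Inl w2 \<in> lists Z"
    using calculation(3,4) unfolding Z_def by auto
  ultimately show False
    using rs_irreducible_no_lhs assms by fastforce
qed

lemma irreducible_Inr:
  assumes w: "w \<in> words_plus Y" and irreducible: "rs_irreducible Z rules (map Inr w)"
  shows "rs_irreducible Y Q w" and "eU w \<noteq> T'"
proof -
  show irreducible_Q: "rs_irreducible Y Q w"
    unfolding rs_irreducible_def
  proof
    assume "\<exists>w'. (w, w') \<in> rstep Y Q"
    then obtain w1 u v w2 where decomp: "w = w1 @ u @ w2" "(u, v) \<in> Q" "w1 \<in> lists Y" "w2 \<in> lists Y"
      unfolding rstep_def by blast
    have "u \<in> fst ` Q"
      using decomp(2) by force
    then obtain v' where "(map Inr u, v') \<in> rules"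
      using decomp(2) unfolding rules_def rules_U_def rules_zero_def by (cases "eU u = T'") blast+
    moreover have "map Inr w1 \<in> lists Z" "map Inr w2 \<in> lists Z"
      using decomp(3,4) unfolding Z_def by auto
    ultimately show False
      using rs_irreducible_no_lhs irreducible decomp(1) by fastforce
  qed
  show "eU w \<noteq> T'"
  proof
    assume "eU w = T'"
    then have "w = zero_nf"
      using eU_irreducible_inj[OF w _ irreducible_Q] zero_nf by auto
    then have "(map Inr w, map Inl (T_word (word_prod S rep zero_nf))) \<in> rules"
      using zero_nf unfolding rules_def rules_zero_def by blast
    then show False
      using rs_irreducible_no_lhs[of Z rules "[]" _ "[]"] irreducible by auto
  qed
qed

lemma irreducible_cases [consumes 2, case_names T U]:
  assumes w: "w \<in> words_plus Z" and irreducible: "rs_irreducible Z rules w"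
  obtains (T) w' where "w' \<in> words_plus X" "w = map Inl w'" "rs_irreducible X R w'"
  | (U) w' where "w' \<in> words_plus Y" "w = map Inr w'" "rs_irreducible Y Q w'" "eU w' \<noteq> T'"
proof -
  have w_lists: "w \<in> lists (Inl ` X \<union> Inr ` Y)" "w \<noteq> []"
    using w unfolding words_plus_def Z_def by auto
  from w_lists(1) show thesis
  proof (cases rule: lists_Inl_Inr_cases)
    case Inl
    then obtain w' where "w' \<in> lists X" "w = map Inl w'"
      unfolding lists_image by auto
    then show thesis
      using T irreducible_Inl irreducible w_lists(2) unfolding words_plus_def by auto
  next
    case Inr
    then obtain w' where "w' \<in> lists Y" "w = map Inr w'"
      unfolding lists_image by auto
    moreover have "w' \<in> words_plus Y"
      using calculation w_lists(2) unfolding words_plus_def by auto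
    ultimately show thesis
      using U irreducible_Inr irreducible by auto
  next
    case (border w1 w2 x y)
    moreover have "w1 \<in> lists Z" "w2 \<in> lists Z"
      using w_lists(1) border(3) unfolding Z_def by auto
    moreover have "([Inl x, Inr y], map Inl (T_word (eT [x] \<otimes>\<^bsub>S\<^esub> rep y))) \<in> rules"
      "([Inr y, Inl x], map Inl (T_word (rep y \<otimes>\<^bsub>S\<^esub> eT [x]))) \<in> rules"
      using border(1,2) unfolding rules_def rules_TU_def rules_UT_def by auto
    ultimately show thesis
      using rs_irreducible_no_lhs irreducible by metis
  qed
qed

lemma irreducible_unique:
  assumes u: "u \<in> words_plus Z" and v: "v \<in> words_plus Z"
    and irreducible: "rs_irreducible Z rules u" "rs_irreducible Z rules v" and eq: "eZ u = eZ v"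
  shows "u = v"
proof -
  have separated: "eZ (map Inl a) \<noteq> eZ (map Inr b)"
    if "a \<in> words_plus X" "b \<in> words_plus Y" "eU b \<noteq> T'" for a b
    using that eZ_Inl eZ_Inr eT_in_ideal eU_neq_ideal by metis
  show ?thesis
  using u irreducible(1)
  proof (cases rule: irreducible_cases)
    case (T u')
    note u' = this
    show ?thesis
    using v irreducible(2)
    proof (cases rule: irreducible_cases)
      case (T v')
      then have "eT u' = eT v'"
        using u' eq eZ_Inl by simp
      then show ?thesis
        using eT_irreducible_inj u' T by simp
    next
      case (U v')
      then show ?thesis
        using u' separated eq by simp
    qed
  next
    case (U u')
    note u' = this
    show ?thesis
    using v irreducible(2)
    proof (cases rule: irreducible_cases)
      case (T v')
      then show ?thesis
        using u' separated eq by metis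
    next
      case (U v')
      then have "eU u' = eU v'"
        using u' eq eZ_Inr eU_word_prod by simp
      then show ?thesis
        using eU_irreducible_inj u' U by simp
    qed
  qed
qed

definition Y_letter :: "'x + 'y \<Rightarrow> 'y option" where
  "Y_letter = case_sum (\<lambda>_. None) Some"

definition X_letter :: "'x + 'y \<Rightarrow> 'x option" where
  "X_letter = case_sum Some (\<lambda>_. None)"

definition block_measure :: "('x + 'y) list \<Rightarrow> 'y list multiset \<times> 'x list multiset" where
  "block_measure w = (nonempty_mset (blocks Y_letter w), nonempty_mset (blocks X_letter w))"

abbreviation measure_order where
  "measure_order \<equiv> Multiset.mult (reduct_or_factor Y Q) <*lex*> Multiset.mult ((rstep X R)\<inverse>)"

lemma wf_measure_order: "wf measure_order"
  using wf_reduct_or_factor[OF noetherian_Q rewriting_system_Q] noetherian_R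
  by (auto simp: noetherian_rs_iff_wf intro: wf_mult)

lemma blocks_Y_letter_lists: "w \<in> lists Z \<Longrightarrow> b \<in> set (blocks Y_letter w) \<Longrightarrow> b \<in> lists Y"
  using set_blocks_subset[of b Y_letter w] unfolding Z_def Y_letter_def by (force split: sum.splits)

lemma blocks_X_letter_lists: "w \<in> lists Z \<Longrightarrow> b \<in> set (blocks X_letter w) \<Longrightarrow> b \<in> lists X"
  using set_blocks_subset[of b X_letter w] unfolding Z_def X_letter_def by (force split: sum.splits)

lemma Y_blocks_Inl:
  "a \<noteq> [] \<Longrightarrow> nonempty_mset (blocks Y_letter (w1 @ map Inl a @ w2)) =
     nonempty_mset (butlast (blocks Y_letter w1) @ [last (blocks Y_letter w1), hd (blocks Y_letter w2)] @
                    tl (blocks Y_letter w2))"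
  by (rule nonempty_mset_blocks_append_None) (auto simp: Y_letter_def)

lemma Y_blocks_Inr:
  "blocks Y_letter (w1 @ map Inr a @ w2) =
     butlast (blocks Y_letter w1) @ [last (blocks Y_letter w1) @ a @ hd (blocks Y_letter w2)] @
     tl (blocks Y_letter w2)"
  using blocks_append_Some[of "map Inr a" Y_letter w1 w2] by (simp add: Y_letter_def comp_def)

lemma X_blocks_Inl:
  "blocks X_letter (w1 @ map Inl a @ w2) =
     butlast (blocks X_letter w1) @ [last (blocks X_letter w1) @ a @ hd (blocks X_letter w2)] @
     tl (blocks X_letter w2)"
  using blocks_append_Some[of "map Inl a" X_letter w1 w2] by (simp add: X_letter_def comp_def)

lemma block_measure_rules_T:
  assumes rule: "(u0, v0) \<in> R" and w: "w1 \<in> lists Z" "w2 \<in> lists Z"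
  shows "(block_measure (w1 @ map Inl v0 @ w2), block_measure (w1 @ map Inl u0 @ w2)) \<in> measure_order"
proof -
  let ?A = "butlast (blocks X_letter w1)" and ?c = "last (blocks X_letter w1)"
    and ?d = "hd (blocks X_letter w2)" and ?B = "tl (blocks X_letter w2)"
  have nonempty: "u0 \<noteq> []" "v0 \<noteq> []"
    using R_words_plus[OF rule] unfolding words_plus_def by auto
  have "?c \<in> lists X" "?d \<in> lists X"
    using blocks_X_letter_lists w by simp_all
  then have "(?c @ u0 @ ?d, ?c @ v0 @ ?d) \<in> rstep X R"
    by (rule rstep_in_context[OF rstep_of_rule[OF rule]])
  then have "(nonempty_mset (?A @ [?c @ v0 @ ?d] @ ?B), nonempty_mset (?A @ [?c @ u0 @ ?d] @ ?B))
               \<in> Multiset.mult ((rstep X R)\<inverse>)"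
    using nonempty by (intro mult_nonempty_mset_replace) auto
  then show ?thesis
    unfolding block_measure_def in_lex_prod X_blocks_Inl Y_blocks_Inl[OF nonempty(1)] Y_blocks_Inl[OF nonempty(2)]
    by simp
qed

lemma block_measure_rules_U:
  assumes rule: "(u0, v0) \<in> Q" and w: "w1 \<in> lists Z" "w2 \<in> lists Z"
  shows "(block_measure (w1 @ map Inr v0 @ w2), block_measure (w1 @ map Inr u0 @ w2)) \<in> measure_order"
proof -
  let ?A = "butlast (blocks Y_letter w1)" and ?c = "last (blocks Y_letter w1)"
    and ?d = "hd (blocks Y_letter w2)" and ?B = "tl (blocks Y_letter w2)"
  have nonempty: "u0 \<noteq> []"
    using Q_words_plus[OF rule] unfolding words_plus_def by auto
  have "?c \<in> lists Y" "?d \<in> lists Y"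
    using blocks_Y_letter_lists w by simp_all
  then have "(?c @ u0 @ ?d, ?c @ v0 @ ?d) \<in> rstep Y Q"
    by (rule rstep_in_context[OF rstep_of_rule[OF rule]])
  then have "(nonempty_mset (?A @ [?c @ v0 @ ?d] @ ?B), nonempty_mset (?A @ [?c @ u0 @ ?d] @ ?B))
               \<in> Multiset.mult (reduct_or_factor Y Q)"
    using nonempty by (intro mult_nonempty_mset_replace) (auto simp: reduct_or_factor_def)
  then show ?thesis
    unfolding block_measure_def in_lex_prod Y_blocks_Inr by simp
qed

lemma block_measure_rules_zero:
  assumes u0: "u0 \<in> words_plus Y" and v0: "v0 \<noteq> []" and w: "w1 \<in> lists Z" "w2 \<in> lists Z"
  shows "(block_measure (w1 @ map Inl v0 @ w2), block_measure (w1 @ map Inr u0 @ w2)) \<in> measure_order"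
proof -
  let ?A = "butlast (blocks Y_letter w1)" and ?c = "last (blocks Y_letter w1)"
    and ?d = "hd (blocks Y_letter w2)" and ?B = "tl (blocks Y_letter w2)"
  have "?c \<in> lists Y" "?d \<in> lists Y"
    using blocks_Y_letter_lists w by simp_all
  then have "?c @ u0 @ ?d \<in> lists Y" and "u0 \<noteq> []"
    using u0 unfolding words_plus_def by auto
  then have "(?c, ?c @ u0 @ ?d) \<in> reduct_or_factor Y Q" "(?d, ?c @ u0 @ ?d) \<in> reduct_or_factor Y Q"
    using reduct_or_factorI[of "[]" ?c "u0 @ ?d" Y Q] reduct_or_factorI[of "?c @ u0" ?d "[]" Y Q] by simp_all
  then have "(nonempty_mset (?A @ [?c, ?d] @ ?B), nonempty_mset (?A @ [?c @ u0 @ ?d] @ ?B))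
               \<in> Multiset.mult (reduct_or_factor Y Q)"
    using \<open>u0 \<noteq> []\<close> by (intro mult_nonempty_mset_replace) auto
  then show ?thesis
    unfolding block_measure_def in_lex_prod Y_blocks_Inl[OF v0] Y_blocks_Inr by simp
qed

lemma block_measure_rules_TU:
  assumes "x \<in> X" "y \<in> Y" and v0: "v0 \<noteq> []" and w: "w1 \<in> lists Z" "w2 \<in> lists Z"
  shows "(block_measure (w1 @ map Inl v0 @ w2), block_measure (w1 @ [Inl x, Inr y] @ w2)) \<in> measure_order"
proof -
  define A where "A = butlast (blocks Y_letter w1) @ [last (blocks Y_letter w1)]"
  let ?d = "hd (blocks Y_letter w2)" and ?B = "tl (blocks Y_letter w2)"
  have "?d \<in> lists Y"
    using blocks_Y_letter_lists w by simp
  then have "(?d, y # ?d) \<in> reduct_or_factor Y Q"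
    using reduct_or_factorI[of "[y]" ?d "[]" Y Q] assms(2) by simp
  then have "(nonempty_mset (A @ [?d] @ ?B), nonempty_mset (A @ [y # ?d] @ ?B))
               \<in> Multiset.mult (reduct_or_factor Y Q)"
    by (intro mult_nonempty_mset_replace) auto
  moreover have "blocks Y_letter (w1 @ [Inl x, Inr y] @ w2) = A @ [y # ?d] @ ?B"
    unfolding A_def append_assoc by (rule blocks_append_None_Some) (simp_all add: Y_letter_def)
  moreover have "nonempty_mset (blocks Y_letter (w1 @ map Inl v0 @ w2)) = nonempty_mset (A @ [?d] @ ?B)"
    unfolding A_def Y_blocks_Inl[OF v0] by (simp only: append_assoc append_Cons append_Nil)
  ultimately show ?thesis
    unfolding block_measure_def in_lex_prod by simp
qed

lemma block_measure_rules_UT: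
  assumes "x \<in> X" "y \<in> Y" and v0: "v0 \<noteq> []" and w: "w1 \<in> lists Z" "w2 \<in> lists Z"
  shows "(block_measure (w1 @ map Inl v0 @ w2), block_measure (w1 @ [Inr y, Inl x] @ w2)) \<in> measure_order"
proof -
  let ?A = "butlast (blocks Y_letter w1)" and ?c = "last (blocks Y_letter w1)"
    and ?d = "hd (blocks Y_letter w2)" and ?B = "tl (blocks Y_letter w2)"
  have "?c \<in> lists Y"
    using blocks_Y_letter_lists w by simp
  then have "(?c, ?c @ [y]) \<in> reduct_or_factor Y Q"
    using reduct_or_factorI[of "[]" ?c "[y]" Y Q] assms(2) by simp
  then have "(nonempty_mset (?A @ [?c] @ [?d] @ ?B), nonempty_mset (?A @ [?c @ [y]] @ [?d] @ ?B))
               \<in> Multiset.mult (reduct_or_factor Y Q)"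
    by (intro mult_nonempty_mset_replace) auto
  moreover have "blocks Y_letter (w1 @ [Inr y, Inl x] @ w2) = ?A @ [?c @ [y]] @ [?d] @ ?B"
    by (rule blocks_append_Some_None) (simp_all add: Y_letter_def)
  ultimately show ?thesis
    unfolding block_measure_def in_lex_prod Y_blocks_Inl[OF v0] by simp
qed

lemma rstep_rules_block_measure:
  assumes "(w, w') \<in> rstep Z rules"
  shows "(block_measure w', block_measure w) \<in> measure_order"
proof -
  obtain w1 u v w2 where w: "w = w1 @ u @ w2" "w' = w1 @ v @ w2" and rule: "(u, v) \<in> rules"
    and around: "w1 \<in> lists Z" "w2 \<in> lists Z"
    using assms unfolding rstep_def by blast
  have T_word_nonempty: "T_word t \<noteq> []" if "t \<in> T'" for t
    using T_word[OF that] unfolding words_plus_def by auto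
  from rule show ?thesis
  proof (cases rule: rules_cases)
    case T
    then show ?thesis
      using w block_measure_rules_T around by simp
  next
    case U
    then show ?thesis
      using w block_measure_rules_U around by simp
  next
    case zero
    then show ?thesis
      using w block_measure_rules_zero zero_rule_lhs T_word_nonempty around by simp
  next
    case TU
    then show ?thesis
      using w block_measure_rules_TU letter_products_in_ideal T_word_nonempty around by simp
  next
    case UT
    then show ?thesis
      using w block_measure_rules_UT letter_products_in_ideal T_word_nonempty around by simp
  qed
qed

lemma noetherian_rules: "noetherian_rs Z rules"
  unfolding noetherian_rs_iff_wf
proof (rule wf_subset)
  show "wf (inv_image measure_order block_measure)"
    using wf_measure_order by (rule wf_inv_image)
  show "(rstep Z rules)\<inverse> \<subseteq> inv_image measure_order block_measure"
    using rstep_rules_block_measure by auto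
qed

lemma nf_presentation_rules: "nf_presentation S Z rules eZ"
  unfolding nf_presentation_def
  using finite_X finite_Y finite_rules rewriting_system_rules noetherian_rules eZ_closed eZ_onto
    eZ_append eZ_rule irreducible_unique
  by (auto simp: Z_def)

end

theorem theorem1p2:
  fixes S :: "'a monoid" and T :: "'b monoid" and U :: "'c monoid" and T' :: "'a set"
  assumes "is_semigroup S" and "is_semigroup T" and "is_semigroup U"
    and "semigroup_ideal T' S"
    and "T \<cong> \<lparr>carrier = T', mult = mult S, one = one S\<rparr>"
    and "rees_quotient S T' \<cong> U"
    and "defined_by_fcrs T" and "defined_by_fcrs U"
  shows "defined_by_fcrs S"
proof -
  let ?T' = "\<lparr>carrier = T', mult = mult S, one = one S\<rparr>" and ?U = "rees_quotient S T'"
  obtain X :: "nat set" and R eT where "nf_presentation T X R eT"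
    using defined_by_fcrs_imp_nf_presentation assms(2,7) by blast
  moreover obtain h where "h \<in> iso T ?T'"
    using assms(5) unfolding is_iso_def by blast
  ultimately have pres_T: "nf_presentation ?T' X R (h \<circ> eT)"
    by (rule nf_presentation_iso)
  obtain Y :: "nat set" and Q eU where "nf_presentation U Y Q eU"
    using defined_by_fcrs_imp_nf_presentation assms(3,8) by blast
  moreover obtain k where "k \<in> iso ?U U"
    using assms(6) unfolding is_iso_def by blast
  then have "inv_into (carrier ?U) k \<in> iso U ?U"
    using iso_inv_into_closed rees_quotient_mult_closed[OF assms(1,4)] by blast
  ultimately have pres_U: "nf_presentation ?U Y Q (inv_into (carrier ?U) k \<circ> eU)"
    by (rule nf_presentation_iso)
  interpret ideal_extension S T' X R "h \<circ> eT" Y Q "inv_into (carrier ?U) k \<circ> eU"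
    using assms(1,4) pres_T pres_U by unfold_locales
  show ?thesis
    using nf_presentation_imp_defined_by_fcrs_countable[OF nf_presentation_rules] .
qed

end
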